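(* Let $n,m\in\mathbb N$, $d:=\min\{n,m\}$, fix an integer $k\in\{1,\dots,d-1\}$ and $\theta\in(0,1)$, and set $\alpha:=k+\theta$. Then (a) $\mathcal V_k\subsetneq\mathcal V_\alpha\subsetneq\mathcal V_{k+1}$; (b) $\mathsf K_k\subsetneq\mathsf K_\alpha\subsetneq\mathsf K_{k+1}$; (c) $\mathsf{BP}_k\supsetneq\mathsf{BP}_\alpha\supsetneq\mathsf{BP}_{k+1}$.
   Context: For $\psi=\sum_{i,j}a_{ij}e_i\otimes f_j\in\mathbb C^n\otimes\mathbb C^m$, its Schmidt coefficients $s_1(\psi)\ge\dots\ge s_d(\psi)\ge0$ are the singular values of $[a_{ij}]$. For $\beta\in[1,d]$ with $k'=\lfloor\beta\rfloor$, $\theta'=\beta-k'$, $r'=\lceil\beta\rceil$, a unit vector $\psi$ is $\beta$-admissible if $s_j(\psi)=0$ for $j\ge r'+1$ and, when $\theta'>0$, $s_{k'+1}(\psi)\le\frac{\theta'}{k'}\sum_{j=1}^{k'}s_j(\psi)$; $\mathcal V_\beta$ is the set of these (for integer $\beta$ it is the set of unit vectors of Schmidt rank $\le\beta$). $\mathsf K_\beta$ is the closure of the convex cone generated by $\{\psi\psi^\ast:\psi\in\mathcal V_\beta\}$, and $\mathsf{BP}_\beta:=\{W \text{ Hermitian in } \mathbb M_n\otimes\mathbb M_m:\langle\psi,W\psi\rangle\ge0\ \forall\psi\in\mathcal V_\beta\}$. *)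

theory Defs
  imports "HOL-Analysis.Analysis"
begin

(* A vector psi in C^n (x) C^m is represented by its coefficient matrix
   a :: nat => nat => complex, psi = sum_{i<n,j<m} a i j e_i (x) f_j,
   with a i j = 0 outside {..<n} x {..<m}.
   Operators on C^n (x) C^m (elements of M_n (x) M_m) are represented as
   W :: nat*nat => nat*nat => complex, the matrix in the basis e_i (x) f_j,
   with entries zero outside the index set. *)

definition tidx :: "nat \<Rightarrow> nat \<Rightarrow> (nat \<times> nat) set" where
  "tidx n m = {..<n} \<times> {..<m}"

definition supported_vec :: "nat \<Rightarrow> nat \<Rightarrow> (nat \<Rightarrow> nat \<Rightarrow> complex) \<Rightarrow> bool" where
  "supported_vec n m a \<longleftrightarrow> (\<forall>i j. (i \<ge> n \<or> j \<ge> m) \<longrightarrow> a i j = 0)"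

definition unitary_fun :: "nat \<Rightarrow> (nat \<Rightarrow> nat \<Rightarrow> complex) \<Rightarrow> bool" where
  "unitary_fun n U \<longleftrightarrow>
     (\<forall>i<n. \<forall>j<n. (\<Sum>l<n. cnj (U l i) * U l j) = (if i = j then 1 else 0))"

definition is_svals :: "nat \<Rightarrow> nat \<Rightarrow> (nat \<Rightarrow> nat \<Rightarrow> complex) \<Rightarrow> (nat \<Rightarrow> real) \<Rightarrow> bool" where
  "is_svals n m a s \<longleftrightarrow>
     (\<forall>l. 0 \<le> s l) \<and> (\<forall>l. min n m \<le> l \<longrightarrow> s l = 0) \<and>
     (\<forall>l l'. l \<le> l' \<longrightarrow> s l' \<le> s l) \<and>
     (\<exists>U V. unitary_fun n U \<and> unitary_fun m V \<and>
        (\<forall>i<n. \<forall>j<m. a i j = (\<Sum>l<min n m. U i l * complex_of_real (s l) * cnj (V j l))))"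

(* Schmidt coefficients, 1-based: schmidt n m a j = s_j(psi) for j >= 1
   (the j-th largest singular value of [a_ij]); zero for j > min n m *)
definition schmidt :: "nat \<Rightarrow> nat \<Rightarrow> (nat \<Rightarrow> nat \<Rightarrow> complex) \<Rightarrow> nat \<Rightarrow> real" where
  "schmidt n m a j = (THE s. is_svals n m a s) (j - 1)"

definition unit_vec :: "nat \<Rightarrow> nat \<Rightarrow> (nat \<Rightarrow> nat \<Rightarrow> complex) \<Rightarrow> bool" where
  "unit_vec n m a \<longleftrightarrow> supported_vec n m a \<and> (\<Sum>i<n. \<Sum>j<m. (cmod (a i j))\<^sup>2) = 1"

definition admissible :: "nat \<Rightarrow> nat \<Rightarrow> real \<Rightarrow> (nat \<Rightarrow> nat \<Rightarrow> complex) \<Rightarrow> bool" where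
  "admissible n m \<beta> a \<longleftrightarrow>
     (let k' = nat \<lfloor>\<beta>\<rfloor>; \<theta>' = \<beta> - real k'; r' = nat \<lceil>\<beta>\<rceil> in
      unit_vec n m a \<and>
      (\<forall>j. r' + 1 \<le> j \<longrightarrow> schmidt n m a j = 0) \<and>
      (\<theta>' > 0 \<longrightarrow> schmidt n m a (k' + 1) \<le> \<theta>' / real k' * (\<Sum>j=1..k'. schmidt n m a j)))"

definition Vset :: "nat \<Rightarrow> nat \<Rightarrow> real \<Rightarrow> (nat \<Rightarrow> nat \<Rightarrow> complex) set" where
  "Vset n m \<beta> = {a. admissible n m \<beta> a}"

definition rank1_op :: "(nat \<Rightarrow> nat \<Rightarrow> complex) \<Rightarrow> (nat \<times> nat) \<Rightarrow> (nat \<times> nat) \<Rightarrow> complex" where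
  "rank1_op a = (\<lambda>(i, j) (i', j'). a i j * cnj (a i' j'))"

definition cvx_cone_gen ::
  "((nat \<times> nat) \<Rightarrow> (nat \<times> nat) \<Rightarrow> complex) set \<Rightarrow> ((nat \<times> nat) \<Rightarrow> (nat \<times> nat) \<Rightarrow> complex) set" where
  "cvx_cone_gen S = {X. \<exists>(N::nat) c v. (\<forall>i<N. 0 \<le> c i \<and> v i \<in> S) \<and>
                       X = (\<lambda>x y. \<Sum>i<N. complex_of_real (c i) * v i x y)}"

(* K_beta: closure (entrywise / product topology) of the convex cone generated by psi psi^* *)
definition Kset :: "nat \<Rightarrow> nat \<Rightarrow> real \<Rightarrow> ((nat \<times> nat) \<Rightarrow> (nat \<times> nat) \<Rightarrow> complex) set" where
  "Kset n m \<beta> = closure (cvx_cone_gen (rank1_op ` Vset n m \<beta>))"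

definition hermitian_op :: "nat \<Rightarrow> nat \<Rightarrow> ((nat \<times> nat) \<Rightarrow> (nat \<times> nat) \<Rightarrow> complex) \<Rightarrow> bool" where
  "hermitian_op n m W \<longleftrightarrow>
     (\<forall>x y. (x \<notin> tidx n m \<or> y \<notin> tidx n m) \<longrightarrow> W x y = 0) \<and>
     (\<forall>x\<in>tidx n m. \<forall>y\<in>tidx n m. W x y = cnj (W y x))"

definition qform :: "nat \<Rightarrow> nat \<Rightarrow> ((nat \<times> nat) \<Rightarrow> (nat \<times> nat) \<Rightarrow> complex) \<Rightarrow> (nat \<Rightarrow> nat \<Rightarrow> complex) \<Rightarrow> complex" where
  "qform n m W a = (\<Sum>x\<in>tidx n m. \<Sum>y\<in>tidx n m. cnj (case_prod a x) * W x y * case_prod a y)"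

definition BPset :: "nat \<Rightarrow> nat \<Rightarrow> real \<Rightarrow> ((nat \<times> nat) \<Rightarrow> (nat \<times> nat) \<Rightarrow> complex) set" where
  "BPset n m \<beta> = {W. hermitian_op n m W \<and> (\<forall>a\<in>Vset n m \<beta>. 0 \<le> Re (qform n m W a))}"

end

theory Submission
  imports Defs
begin

(*
  Everything is controlled by the singular values of the coefficient matrix a of psi. They
  exist (successive maximisation of |a y| / |y| on orthogonal complements) and are unique
  (min-max argument), so the Schmidt coefficients are well defined.

  The inclusions V_k <= V_(k+theta) <= V_(k+1) are immediate from the definition and induce
  K_k <= K_(k+theta) <= K_(k+1) and the reverse inclusions of the BP sets. For strictness use
  W = c 1 - omega omega^* with omega = sum_(i<=k) e_i (x) f_i, for which
  <psi, W psi> = c - |sum_i a_ii|^2. Since |sum_i a_ii| <= s_1 + s_2 + ..., Cauchy-Schwarz gives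
  |sum_i a_ii|^2 <= k on V_k, and <= (k+theta)^2 / (k+theta^2) on V_(k+theta). The diagonal
  vectors with Schmidt coefficients proportional to (1,...,1,theta) and (1,...,1) exceed these
  bounds. A pair (W, psi) with W in BP_beta, psi in V_gamma and <psi, W psi> < 0 separates
  V_beta from V_gamma (by psi), K_beta from K_gamma (by psi psi^*, since tr(W X) >= 0 on the
  closed cone K_beta) and BP_gamma from BP_beta (by W).
*)

section \<open>Finite-dimensional inner products\<close>

definition inner_on :: "'a set \<Rightarrow> ('a \<Rightarrow> complex) \<Rightarrow> ('a \<Rightarrow> complex) \<Rightarrow> complex" where
  "inner_on I x y = (\<Sum>i\<in>I. cnj (x i) * y i)"

lemma cnj_mult_self: "cnj z * z = complex_of_real ((cmod z)\<^sup>2)"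
  using complex_norm_square[of z] by (simp add: mult.commute)

lemma inner_on_self: "inner_on I x x = complex_of_real (\<Sum>i\<in>I. (cmod (x i))\<^sup>2)"
  by (simp add: inner_on_def cnj_mult_self)

lemma cnj_inner_on: "cnj (inner_on I x y) = inner_on I y x"
  by (simp add: inner_on_def mult.commute)

lemma inner_on_sum_right:
  "inner_on I x (\<lambda>i. \<Sum>l\<in>L. c l * y l i) = (\<Sum>l\<in>L. c l * inner_on I x (y l))"
  unfolding inner_on_def by (simp add: sum_distrib_left mult_ac) (rule sum.swap)

lemma inner_on_sum_left:
  "inner_on I (\<lambda>i. \<Sum>l\<in>L. c l * y l i) x = (\<Sum>l\<in>L. cnj (c l) * inner_on I (y l) x)"
proof -
  have "inner_on I (\<lambda>i. \<Sum>l\<in>L. c l * y l i) x = cnj (inner_on I x (\<lambda>i. \<Sum>l\<in>L. c l * y l i))"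
    by (simp add: cnj_inner_on)
  then show ?thesis by (simp add: inner_on_sum_right cnj_inner_on)
qed

lemma inner_on_diff_right: "inner_on I x (\<lambda>i. y i - z i) = inner_on I x y - inner_on I x z"
  unfolding inner_on_def by (simp add: right_diff_distrib sum_subtractf)

lemma inner_on_diff_left: "inner_on I (\<lambda>i. y i - z i) x = inner_on I y x - inner_on I z x"
  unfolding inner_on_def by (simp add: left_diff_distrib sum_subtractf)

lemma inner_on_scale_right: "inner_on I x (\<lambda>i. c * y i) = c * inner_on I x y"
  unfolding inner_on_def by (simp add: sum_distrib_left mult_ac)

lemma inner_on_scale_left: "inner_on I (\<lambda>i. c * y i) x = cnj c * inner_on I y x"
  unfolding inner_on_def by (simp add: sum_distrib_left mult_ac)

lemma inner_on_add_scale_right: "inner_on I z (\<lambda>i. x i + t * y i) = inner_on I z x + t * inner_on I z y"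
  unfolding inner_on_def by (simp add: algebra_simps sum.distrib sum_distrib_left)

lemma inner_on_add_scale_self:
  "inner_on I (\<lambda>i. x i + t * y i) (\<lambda>i. x i + t * y i) =
   inner_on I x x + t * inner_on I x y + cnj t * inner_on I y x + cnj t * t * inner_on I y y"
  unfolding inner_on_def by (simp add: algebra_simps sum.distrib sum_distrib_left)

lemma inner_on_cong_right: "(\<And>i. i \<in> I \<Longrightarrow> y i = y' i) \<Longrightarrow> inner_on I x y = inner_on I x y'"
  unfolding inner_on_def by (intro sum.cong) auto

definition basis_vec :: "'a \<Rightarrow> 'a \<Rightarrow> complex" where
  "basis_vec i = (\<lambda>j. if j = i then 1 else 0)"

lemma inner_on_basis_vec_right: "finite I \<Longrightarrow> i \<in> I \<Longrightarrow> inner_on I x (basis_vec i) = cnj (x i)"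
  unfolding inner_on_def basis_vec_def by (simp add: if_distrib cong: if_cong)

lemma sum_norm_sq_basis_vec: "finite I \<Longrightarrow> i \<in> I \<Longrightarrow> (\<Sum>j\<in>I. (cmod (basis_vec i j))\<^sup>2) = 1"
  unfolding basis_vec_def by (simp add: if_distrib[of "\<lambda>z. (cmod z)\<^sup>2"] cong: if_cong)

definition orthonormal_on :: "'a set \<Rightarrow> nat \<Rightarrow> (nat \<Rightarrow> 'a \<Rightarrow> complex) \<Rightarrow> bool" where
  "orthonormal_on I k u \<longleftrightarrow> (\<forall>l<k. \<forall>l'<k. inner_on I (u l) (u l') = (if l = l' then 1 else 0))"

lemma orthonormal_on_norm:
  "orthonormal_on I k u \<Longrightarrow> l < k \<Longrightarrow> (\<Sum>i\<in>I. (cmod (u l i))\<^sup>2) = 1"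
  unfolding orthonormal_on_def using inner_on_self[of I "u l"] by (metis of_real_eq_1_iff)

lemma orthonormal_on_fun_upd:
  assumes "orthonormal_on I k u" "inner_on I x x = 1" "\<forall>l<k. inner_on I (u l) x = 0"
  shows "orthonormal_on I (Suc k) (u(k := x))"
proof -
  have "inner_on I x (u l) = 0" if "l < k" for l
    using assms(3) that cnj_inner_on[of I "u l" x] by (metis complex_cnj_zero)
  then show ?thesis
    using assms unfolding orthonormal_on_def by (auto simp: less_Suc_eq)
qed

lemma orthonormal_on_normalize:
  assumes "\<And>p q. p < r \<Longrightarrow> q < r \<Longrightarrow> inner_on I (f p) (f q) = (if p = q then complex_of_real (\<sigma> p) else 0)"
    and "\<And>p. p < r \<Longrightarrow> \<sigma> p > 0"
  shows "orthonormal_on I r (\<lambda>p i. complex_of_real (1 / sqrt (\<sigma> p)) * f p i)"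
  unfolding orthonormal_on_def
proof (intro allI impI)
  fix p q assume p: "p < r" and q: "q < r"
  have "1 / sqrt (\<sigma> p) * (1 / sqrt (\<sigma> p) * \<sigma> p) = 1"
    using assms(2)[OF p] by (simp add: field_simps)
  then have "complex_of_real (1 / sqrt (\<sigma> p)) * (complex_of_real (1 / sqrt (\<sigma> p)) * complex_of_real (\<sigma> p)) = 1"
    by (metis of_real_1 of_real_mult)
  then show "inner_on I (\<lambda>i. complex_of_real (1 / sqrt (\<sigma> p)) * f p i)
      (\<lambda>i. complex_of_real (1 / sqrt (\<sigma> q)) * f q i) = (if p = q then 1 else 0)"
    using assms(1)[OF p q]
    by (simp only: inner_on_scale_left inner_on_scale_right complex_cnj_complex_of_real)
      (simp split: if_splits)
qed

definition orth_residual :: "'a set \<Rightarrow> nat \<Rightarrow> (nat \<Rightarrow> 'a \<Rightarrow> complex) \<Rightarrow> ('a \<Rightarrow> complex) \<Rightarrow> 'a \<Rightarrow> complex" where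
  "orth_residual I k u x = (\<lambda>i. x i - (\<Sum>l<k. inner_on I (u l) x * u l i))"

lemma inner_on_orth_residual:
  assumes "orthonormal_on I k u" "l < k"
  shows "inner_on I (u l) (orth_residual I k u x) = 0"
proof -
  have "(\<Sum>l'<k. inner_on I (u l') x * inner_on I (u l) (u l')) =
        (\<Sum>l'<k. if l = l' then inner_on I (u l') x else 0)"
    using assms unfolding orthonormal_on_def by (intro sum.cong) auto
  also have "\<dots> = inner_on I (u l) x" using assms(2) by simp
  finally have "(\<Sum>l'<k. inner_on I (u l') x * inner_on I (u l) (u l')) = inner_on I (u l) x" .
  then show ?thesis
    unfolding orth_residual_def by (simp add: inner_on_diff_right inner_on_sum_right)
qed

lemma norm_sq_orth_residual:
  assumes "orthonormal_on I k u"
  shows "(\<Sum>i\<in>I. (cmod (orth_residual I k u x i))\<^sup>2) =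
         (\<Sum>i\<in>I. (cmod (x i))\<^sup>2) - (\<Sum>l<k. (cmod (inner_on I (u l) x))\<^sup>2)"
proof -
  let ?r = "orth_residual I k u x"
  have "inner_on I ?r (u l) = 0" if "l < k" for l
    using inner_on_orth_residual[OF assms that] cnj_inner_on[of I "u l" ?r] by (metis complex_cnj_zero)
  then have "inner_on I ?r ?r = inner_on I ?r x"
    by (subst (2) orth_residual_def) (simp add: inner_on_diff_right inner_on_sum_right)
  also have "\<dots> = inner_on I x x - (\<Sum>l<k. cnj (inner_on I (u l) x) * inner_on I (u l) x)"
    by (subst orth_residual_def) (simp add: inner_on_diff_left inner_on_sum_left)
  finally have "complex_of_real (\<Sum>i\<in>I. (cmod (?r i))\<^sup>2) =
      complex_of_real ((\<Sum>i\<in>I. (cmod (x i))\<^sup>2) - (\<Sum>l<k. (cmod (inner_on I (u l) x))\<^sup>2))"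
    by (simp add: inner_on_self cnj_mult_self)
  then show ?thesis by (simp only: of_real_eq_iff)
qed

lemma orthonormal_on_coord_norm_le:
  assumes "finite I" "orthonormal_on I k u" "i \<in> I"
  shows "(\<Sum>l<k. (cmod (u l i))\<^sup>2) \<le> 1"
proof -
  have "0 \<le> (\<Sum>j\<in>I. (cmod (orth_residual I k u (basis_vec i) j))\<^sup>2)" by (intro sum_nonneg) simp
  then show ?thesis
    using norm_sq_orth_residual[OF assms(2), of "basis_vec i"] sum_norm_sq_basis_vec[OF assms(1,3)]
    by (simp add: inner_on_basis_vec_right assms(1,3))
qed

lemma orthonormal_on_card_le:
  assumes "finite I" "orthonormal_on I k u"
  shows "k \<le> card I"
proof -
  have "real k = (\<Sum>l<k. \<Sum>i\<in>I. (cmod (u l i))\<^sup>2)"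
    using orthonormal_on_norm[OF assms(2)] by simp
  also have "\<dots> = (\<Sum>i\<in>I. \<Sum>l<k. (cmod (u l i))\<^sup>2)" by (rule sum.swap)
  also have "\<dots> \<le> (\<Sum>i\<in>I. 1)" by (intro sum_mono orthonormal_on_coord_norm_le[OF assms])
  finally show ?thesis by simp
qed

lemma exists_normalized_multiple:
  assumes "(\<Sum>i\<in>I. (cmod (r i))\<^sup>2) > 0"
  shows "\<exists>x. inner_on I x x = 1 \<and> (\<forall>y. inner_on I y r = 0 \<longrightarrow> inner_on I y x = 0)"
proof -
  define c where "c = 1 / sqrt (\<Sum>i\<in>I. (cmod (r i))\<^sup>2)"
  have "c * c * (\<Sum>i\<in>I. (cmod (r i))\<^sup>2) = 1"
    using assms unfolding c_def by (simp add: field_simps)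
  then have "complex_of_real c * (complex_of_real c * complex_of_real (\<Sum>i\<in>I. (cmod (r i))\<^sup>2)) = 1"
    by (simp only: of_real_mult [symmetric] mult.assoc [symmetric]) simp
  then have "inner_on I (\<lambda>i. complex_of_real c * r i) (\<lambda>i. complex_of_real c * r i) = 1"
    by (simp only: inner_on_scale_left inner_on_scale_right inner_on_self complex_cnj_complex_of_real)
  then show ?thesis by (intro exI[of _ "\<lambda>i. complex_of_real c * r i"]) (simp add: inner_on_scale_right)
qed

text \<open>Summing the bound of \<open>orthonormal_on_coord_norm_le\<close> over the coordinates shows that some
  coordinate vector has a nonzero residual; its normalisation is the new vector.\<close>

lemma orthonormal_on_exists_orthogonal_unit:
  assumes "finite I" "orthonormal_on I k u" "k < card I"
  shows "\<exists>x. inner_on I x x = 1 \<and> (\<forall>l<k. inner_on I (u l) x = 0)"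
proof -
  have "\<exists>i\<in>I. (\<Sum>l<k. (cmod (u l i))\<^sup>2) < 1"
  proof (rule ccontr)
    assume "\<not> ?thesis"
    then have "\<forall>i\<in>I. (\<Sum>l<k. (cmod (u l i))\<^sup>2) = 1"
      using orthonormal_on_coord_norm_le[OF assms(1,2)] by (meson antisym not_less)
    then have "real (card I) = (\<Sum>i\<in>I. \<Sum>l<k. (cmod (u l i))\<^sup>2)" by simp
    also have "\<dots> = (\<Sum>l<k. \<Sum>i\<in>I. (cmod (u l i))\<^sup>2)" by (rule sum.swap)
    also have "\<dots> = k" using orthonormal_on_norm[OF assms(2)] by simp
    finally show False using assms(3) by simp
  qed
  then obtain i where i: "i \<in> I" "(\<Sum>l<k. (cmod (u l i))\<^sup>2) < 1" by blast
  have "(\<Sum>j\<in>I. (cmod (orth_residual I k u (basis_vec i) j))\<^sup>2) > 0"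
    using norm_sq_orth_residual[OF assms(2), of "basis_vec i"] sum_norm_sq_basis_vec[OF assms(1) i(1)] i
    by (simp add: inner_on_basis_vec_right assms(1))
  with exists_normalized_multiple inner_on_orth_residual[OF assms(2)] show ?thesis by blast
qed

lemma orthonormal_on_extend_basis:
  assumes "finite I" "orthonormal_on I k u" "k \<le> card I"
  shows "\<exists>u'. orthonormal_on I (card I) u' \<and> (\<forall>l<k. u' l = u l)"
  using assms
proof (induction "card I - k" arbitrary: k u)
  case 0
  then show ?case by (intro exI[of _ u]) (simp add: le_antisym)
next
  case (Suc d)
  then have "k < card I" by simp
  then obtain x where "inner_on I x x = 1" "\<forall>l<k. inner_on I (u l) x = 0"
    using orthonormal_on_exists_orthogonal_unit Suc.prems(1,2) by blast
  then have "orthonormal_on I (Suc k) (u(k := x))" by (rule orthonormal_on_fun_upd[OF Suc.prems(2)])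
  moreover have "d = card I - Suc k" using Suc.hyps(2) by simp
  ultimately obtain u' where "orthonormal_on I (card I) u'" "\<forall>l<Suc k. u' l = (u(k := x)) l"
    using Suc.hyps(1) Suc.prems(1) \<open>k < card I\<close> by (metis Suc_leI)
  then show ?case by (intro exI[of _ u']) auto
qed

text \<open>The residual must vanish: otherwise its normalisation would extend the family beyond
  \<open>card I\<close> vectors.\<close>

lemma orthonormal_on_expansion:
  assumes "finite I" "orthonormal_on I k u" "card I \<le> k" "i \<in> I"
  shows "x i = (\<Sum>l<k. inner_on I (u l) x * u l i)"
proof -
  let ?r = "orth_residual I k u x"
  have "(\<Sum>j\<in>I. (cmod (?r j))\<^sup>2) = 0"
  proof (rule ccontr)
    assume "\<not> ?thesis"
    then have "(\<Sum>j\<in>I. (cmod (?r j))\<^sup>2) > 0" by (simp add: order_less_le sum_nonneg)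
    then obtain y where "inner_on I y y = 1" "\<forall>l<k. inner_on I (u l) y = 0"
      using exists_normalized_multiple inner_on_orth_residual[OF assms(2)] by blast
    from orthonormal_on_card_le[OF assms(1) orthonormal_on_fun_upd[OF assms(2) this]] assms(3)
    show False by simp
  qed
  then have "?r i = 0" using assms(1,4) by (simp add: sum_nonneg_eq_0_iff)
  then show ?thesis unfolding orth_residual_def by simp
qed

lemma parseval_on:
  assumes "finite I" "orthonormal_on I k u" "card I \<le> k"
  shows "inner_on I x y = (\<Sum>l<k. cnj (inner_on I (u l) x) * inner_on I (u l) y)"
proof -
  have "inner_on I x y = inner_on I x (\<lambda>i. \<Sum>l<k. inner_on I (u l) y * u l i)"
    by (rule inner_on_cong_right) (use orthonormal_on_expansion[OF assms] in auto)
  also have "\<dots> = (\<Sum>l<k. inner_on I (u l) y * inner_on I x (u l))" by (rule inner_on_sum_right)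
  also have "\<dots> = (\<Sum>l<k. cnj (inner_on I (u l) x) * inner_on I (u l) y)"
    by (simp add: cnj_inner_on mult.commute)
  finally show ?thesis .
qed

section \<open>Singular value decomposition\<close>

definition mat_vec :: "nat \<Rightarrow> (nat \<Rightarrow> nat \<Rightarrow> complex) \<Rightarrow> (nat \<Rightarrow> complex) \<Rightarrow> nat \<Rightarrow> complex" where
  "mat_vec m a x = (\<lambda>i. \<Sum>j<m. a i j * x j)"

definition norm_sq_on :: "nat \<Rightarrow> (nat \<Rightarrow> complex) \<Rightarrow> real" where
  "norm_sq_on m x = (\<Sum>i<m. (cmod (x i))\<^sup>2)"

definition restrict_vec :: "nat \<Rightarrow> (nat \<Rightarrow> complex) \<Rightarrow> nat \<Rightarrow> complex" where
  "restrict_vec m x = (\<lambda>i. if i < m then x i else 0)"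

lemma inner_on_self_lessThan: "inner_on {..<m} x x = complex_of_real (norm_sq_on m x)"
  by (simp add: inner_on_self norm_sq_on_def)

lemma norm_sq_on_nonneg: "0 \<le> norm_sq_on m x"
  unfolding norm_sq_on_def by (intro sum_nonneg) simp

lemma norm_sq_on_eq_0_iff: "norm_sq_on m x = 0 \<longleftrightarrow> (\<forall>i<m. x i = 0)"
  unfolding norm_sq_on_def by (simp add: sum_nonneg_eq_0_iff) blast

lemma norm_sq_on_scale: "norm_sq_on m (\<lambda>j. c * x j) = (cmod c)\<^sup>2 * norm_sq_on m x"
  unfolding norm_sq_on_def by (simp add: norm_mult power_mult_distrib sum_distrib_left)

lemma norm_sq_on_restrict_vec: "norm_sq_on m (restrict_vec m x) = norm_sq_on m x"
  unfolding norm_sq_on_def restrict_vec_def by (intro sum.cong) auto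

lemma inner_on_restrict_vec: "inner_on {..<m} y (restrict_vec m x) = inner_on {..<m} y x"
  unfolding inner_on_def restrict_vec_def by (intro sum.cong) auto

lemma mat_vec_restrict_vec: "mat_vec m a (restrict_vec m x) = mat_vec m a x"
  unfolding mat_vec_def restrict_vec_def by (intro ext sum.cong) auto

lemma mat_vec_scale: "mat_vec m a (\<lambda>j. c * x j) = (\<lambda>i. c * mat_vec m a x i)"
  unfolding mat_vec_def by (simp add: sum_distrib_left mult_ac)

lemma mat_vec_add_scale: "mat_vec m a (\<lambda>j. x j + c * y j) = (\<lambda>i. mat_vec m a x i + c * mat_vec m a y i)"
  unfolding mat_vec_def by (simp add: sum_distrib_left sum.distrib algebra_simps)

lemma mat_vec_vanishing: "norm_sq_on m x = 0 \<Longrightarrow> mat_vec m a x = (\<lambda>i. 0)"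
  unfolding norm_sq_on_eq_0_iff mat_vec_def by (intro ext sum.neutral) auto

lemma continuous_on_norm_sq_on: "continuous_on UNIV (norm_sq_on m)"
  unfolding norm_sq_on_def by (intro continuous_intros) simp

lemma continuous_on_norm_sq_on_mat_vec: "continuous_on UNIV (\<lambda>x. norm_sq_on n (mat_vec m a x))"
  unfolding norm_sq_on_def mat_vec_def by (intro continuous_intros) simp

lemma continuous_on_inner_on: "continuous_on UNIV (inner_on {..<m} v)"
  unfolding inner_on_def by (intro continuous_intros) simp

lemma compact_unit_vecs_orthogonal:
  "compact {z. (\<forall>i\<ge>m. z i = 0) \<and> norm_sq_on m z = 1 \<and> (\<forall>l<k. inner_on {..<m} (v l) z = 0)}"
    (is "compact ?S")
proof -
  define B where "B = Pi\<^sub>E UNIV (\<lambda>i::nat. if i < m then cball (0::complex) 1 else {0})"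
  have "compactin (product_topology (\<lambda>i. euclidean) UNIV) B"
    unfolding B_def by (subst compactin_PiE) auto
  then have "compact B" by (simp add: euclidean_product_topology)
  have "cmod (z i) \<le> 1" if "norm_sq_on m z = 1" "i < m" for z i
  proof -
    have "(cmod (z i))\<^sup>2 \<le> norm_sq_on m z"
      unfolding norm_sq_on_def by (rule member_le_sum) (use that in auto)
    with that(1) show ?thesis by (simp add: power_le_one_iff abs_square_le_1)
  qed
  then have "?S = B \<inter> {z. norm_sq_on m z = 1} \<inter> (\<Inter>l<k. {z. inner_on {..<m} (v l) z = 0})"
    unfolding B_def by (auto simp: PiE_def Pi_def)
  also have "compact \<dots>"
    by (intro compact_Int_closed closed_INT closed_Collect_eq \<open>compact B\<close> continuous_on_norm_sq_on
        continuous_on_inner_on continuous_on_const ballI)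
  finally show ?thesis .
qed

lemma exists_max_norm_mat_vec_orthogonal:
  assumes orth: "orthonormal_on {..<m} k v" and "k < m"
  shows "\<exists>z. norm_sq_on m z = 1 \<and> (\<forall>l<k. inner_on {..<m} (v l) z = 0) \<and>
    (\<forall>y. (\<forall>l<k. inner_on {..<m} (v l) y = 0) \<longrightarrow>
         norm_sq_on n (mat_vec m a y) \<le> norm_sq_on n (mat_vec m a z) * norm_sq_on m y)"
proof -
  define S where "S = {z. (\<forall>i\<ge>m. z i = 0) \<and> norm_sq_on m z = 1 \<and> (\<forall>l<k. inner_on {..<m} (v l) z = 0)}"
  have restrict_in_S: "restrict_vec m x \<in> S"
    if "norm_sq_on m x = 1" "\<forall>l<k. inner_on {..<m} (v l) x = 0" for x
    using that unfolding S_def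
    by (simp add: norm_sq_on_restrict_vec inner_on_restrict_vec) (simp add: restrict_vec_def)
  obtain x where "inner_on {..<m} x x = 1" "\<forall>l<k. inner_on {..<m} (v l) x = 0"
    using orthonormal_on_exists_orthogonal_unit[of "{..<m}" k v] orth \<open>k < m\<close> by auto
  then have "S \<noteq> {}" using restrict_in_S by (auto simp: inner_on_self_lessThan)
  moreover have "continuous_on S (\<lambda>x. norm_sq_on n (mat_vec m a x))"
    by (rule continuous_on_subset[OF continuous_on_norm_sq_on_mat_vec]) simp
  ultimately obtain z where z: "z \<in> S" "\<forall>y\<in>S. norm_sq_on n (mat_vec m a y) \<le> norm_sq_on n (mat_vec m a z)"
    using continuous_attains_sup[OF compact_unit_vecs_orthogonal[of m k v, folded S_def]] by auto
  have "norm_sq_on n (mat_vec m a y) \<le> norm_sq_on n (mat_vec m a z) * norm_sq_on m y"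
    if y: "\<forall>l<k. inner_on {..<m} (v l) y = 0" for y
  proof (cases "norm_sq_on m y = 0")
    case True then show ?thesis by (simp add: mat_vec_vanishing norm_sq_on_def)
  next
    case False
    then have pos: "norm_sq_on m y > 0" using norm_sq_on_nonneg[of m y] by simp
    define c where "c = complex_of_real (1 / sqrt (norm_sq_on m y))"
    have c2: "(cmod c)\<^sup>2 = 1 / norm_sq_on m y"
      unfolding c_def using pos by (simp only: norm_of_real power2_abs) (simp add: power_divide)
    have "restrict_vec m (\<lambda>j. c * y j) \<in> S"
      by (rule restrict_in_S) (use pos y in \<open>simp_all add: norm_sq_on_scale c2 inner_on_scale_right\<close>)
    then have "norm_sq_on n (mat_vec m a (\<lambda>j. c * y j)) \<le> norm_sq_on n (mat_vec m a z)"
      using z(2) by (auto simp: mat_vec_restrict_vec)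
    then show ?thesis using pos by (simp add: mat_vec_scale norm_sq_on_scale c2 divide_le_eq)
  qed
  with z(1) show ?thesis unfolding S_def by blast
qed

definition is_max_direction :: "nat \<Rightarrow> nat \<Rightarrow> (nat \<Rightarrow> nat \<Rightarrow> complex) \<Rightarrow> (nat \<Rightarrow> nat \<Rightarrow> complex) \<Rightarrow> nat \<Rightarrow> bool" where
  "is_max_direction n m a v l \<longleftrightarrow>
     (\<forall>y. (\<forall>l'<l. inner_on {..<m} (v l') y = 0) \<longrightarrow>
          norm_sq_on n (mat_vec m a y) \<le> norm_sq_on n (mat_vec m a (v l)) * norm_sq_on m y)"

lemma exists_orthonormal_max_directions:
  assumes "k \<le> m"
  shows "\<exists>v. orthonormal_on {..<m} k v \<and> (\<forall>l<k. is_max_direction n m a v l)"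
  using assms
proof (induction k)
  case 0 then show ?case by (auto simp: orthonormal_on_def)
next
  case (Suc k)
  then obtain v where v: "orthonormal_on {..<m} k v" "\<forall>l<k. is_max_direction n m a v l" by auto
  obtain z where z: "norm_sq_on m z = 1" "\<forall>l<k. inner_on {..<m} (v l) z = 0"
    "\<forall>y. (\<forall>l<k. inner_on {..<m} (v l) y = 0) \<longrightarrow>
         norm_sq_on n (mat_vec m a y) \<le> norm_sq_on n (mat_vec m a z) * norm_sq_on m y"
    using exists_max_norm_mat_vec_orthogonal[OF v(1), of n a] Suc.prems by auto
  have "orthonormal_on {..<m} (Suc k) (v(k := z))"
    by (rule orthonormal_on_fun_upd[OF v(1)]) (use z in \<open>auto simp: inner_on_self_lessThan\<close>)
  moreover have "is_max_direction n m a (v(k := z)) l" if "l < Suc k" for l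
    using that v(2) z(3) unfolding is_max_direction_def by (cases "l = k") auto
  ultimately show ?case by blast
qed

lemma max_direction_norm_antimono:
  assumes "orthonormal_on {..<m} k v" "is_max_direction n m a v l" "l \<le> l'" "l' < k"
  shows "norm_sq_on n (mat_vec m a (v l')) \<le> norm_sq_on n (mat_vec m a (v l))"
proof -
  have "\<forall>l''<l. inner_on {..<m} (v l'') (v l') = 0" using assms(1,3,4) unfolding orthonormal_on_def by auto
  moreover have "norm_sq_on m (v l') = 1"
    using assms(1,4) orthonormal_on_norm[OF assms(1)] by (simp add: norm_sq_on_def)
  ultimately show ?thesis using assms(2) unfolding is_max_direction_def by (metis mult.right_neutral)
qed

text \<open>First variation of \<open>\<parallel>a y\<parallel>\<^sup>2 / \<parallel>y\<parallel>\<^sup>2\<close> at the maximiser \<open>v j\<close> in the direction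
  \<open>y = v j + e \<langle>a v j, a v l\<rangle>\<^sup>* v l\<close>.\<close>

lemma max_direction_perturbation:
  assumes orth: "orthonormal_on {..<m} k v" and max: "is_max_direction n m a v j" and "j < l" "l < k"
  defines "K \<equiv> (cmod (inner_on {..<n} (mat_vec m a (v j)) (mat_vec m a (v l))))\<^sup>2"
  shows "2 * e * K \<le> e * e * K * (norm_sq_on n (mat_vec m a (v j)) - norm_sq_on n (mat_vec m a (v l)))"
proof -
  define c where "c = inner_on {..<n} (mat_vec m a (v j)) (mat_vec m a (v l))"
  define nj where "nj = norm_sq_on n (mat_vec m a (v j))"
  define nl where "nl = norm_sq_on n (mat_vec m a (v l))"
  define t where "t = complex_of_real e * cnj c"
  define y where "y = (\<lambda>i. v j i + t * v l i)"
  have tt: "cnj t * t = complex_of_real (e * e * K)" and tc: "t * c = complex_of_real (e * K)"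
    unfolding t_def K_def c_def[symmetric] using cnj_mult_self[of c] by (simp_all add: mult_ac)
  have "complex_of_real (norm_sq_on m y) = 1 + cnj t * t"
    using orth \<open>j < l\<close> \<open>l < k\<close> unfolding y_def inner_on_self_lessThan[symmetric] inner_on_add_scale_self
    by (simp add: orthonormal_on_def)
  also have "\<dots> = complex_of_real (1 + e * e * K)" unfolding tt by simp
  finally have ny: "norm_sq_on m y = 1 + e * e * K" by (simp only: of_real_eq_iff)
  have "complex_of_real (norm_sq_on n (mat_vec m a y)) =
      complex_of_real nj + t * c + cnj (t * c) + cnj t * t * complex_of_real nl"
    unfolding y_def mat_vec_add_scale inner_on_self_lessThan[symmetric] inner_on_add_scale_self
    by (simp add: nj_def nl_def c_def inner_on_self_lessThan cnj_inner_on)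
  also have "\<dots> = complex_of_real (nj + 2 * e * K + e * e * K * nl)" unfolding tt tc by simp
  finally have "norm_sq_on n (mat_vec m a y) = nj + 2 * e * K + e * e * K * nl"
    by (simp only: of_real_eq_iff)
  moreover have "\<forall>l'<j. inner_on {..<m} (v l') y = 0"
    using orth \<open>j < l\<close> \<open>l < k\<close> unfolding y_def orthonormal_on_def by (auto simp: inner_on_add_scale_right)
  ultimately show ?thesis using max ny unfolding is_max_direction_def nj_def[symmetric] nl_def[symmetric]
    by (fastforce simp: algebra_simps)
qed

lemma eq_0_if_linear_le_quadratic:
  fixes K D :: real
  assumes "\<And>e. 0 < e \<Longrightarrow> 2 * e * K \<le> e * e * K * D" "0 \<le> K"
  shows "K = 0"
proof (rule ccontr)
  assume "K \<noteq> 0"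
  define e where "e = 1 / (\<bar>D\<bar> + 1)"
  have "e > 0" unfolding e_def by simp
  have "e * D \<le> e * \<bar>D\<bar>" using \<open>e > 0\<close> by (simp add: mult_left_mono)
  also have "\<dots> < 1" unfolding e_def by (simp add: field_simps)
  finally have "e * D < 1" .
  moreover have "(e * K) * 2 \<le> (e * K) * (e * D)"
    using assms(1)[OF \<open>e > 0\<close>] by (simp add: algebra_simps)
  then have "2 \<le> e * D" using \<open>e > 0\<close> \<open>K \<noteq> 0\<close> assms(2) by (simp add: mult_le_cancel_left_pos)
  ultimately show False by simp
qed

lemma max_direction_images_orthogonal:
  assumes "orthonormal_on {..<m} k v" "is_max_direction n m a v j" "j < l" "l < k"
  shows "inner_on {..<n} (mat_vec m a (v j)) (mat_vec m a (v l)) = 0"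
  using eq_0_if_linear_le_quadratic[OF max_direction_perturbation[OF assms]] by simp

lemma exists_orthonormal_diagonalizing:
  "\<exists>v \<mu>. orthonormal_on {..<m} m v \<and> (\<forall>l. 0 \<le> \<mu> l) \<and> (\<forall>l l'. l \<le> l' \<longrightarrow> l' < m \<longrightarrow> \<mu> l' \<le> \<mu> l) \<and>
     (\<forall>p<m. \<forall>q<m. inner_on {..<n} (mat_vec m a (v p)) (mat_vec m a (v q)) =
                   (if p = q then complex_of_real (\<mu> p) else 0))"
proof -
  obtain v where orth: "orthonormal_on {..<m} m v" and max: "\<forall>l<m. is_max_direction n m a v l"
    using exists_orthonormal_max_directions[of m m n a] by auto
  define \<mu> where "\<mu> l = norm_sq_on n (mat_vec m a (v l))" for l
  have "inner_on {..<n} (mat_vec m a (v p)) (mat_vec m a (v q)) = (if p = q then complex_of_real (\<mu> p) else 0)"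
    if "p < m" "q < m" for p q
  proof -
    consider "p < q" | "p = q" | "q < p" by linarith
    then show ?thesis
    proof cases
      case 1
      have "is_max_direction n m a v p" using max that by blast
      from max_direction_images_orthogonal[OF orth this 1 \<open>q < m\<close>] 1 show ?thesis by simp
    next
      case 2 then show ?thesis by (simp add: inner_on_self_lessThan \<mu>_def)
    next
      case 3
      then have "inner_on {..<n} (mat_vec m a (v q)) (mat_vec m a (v p)) = 0"
        using max_direction_images_orthogonal[OF orth _ 3] max that by simp
      moreover have "inner_on {..<n} (mat_vec m a (v p)) (mat_vec m a (v q)) =
          cnj (inner_on {..<n} (mat_vec m a (v q)) (mat_vec m a (v p)))"
        by (simp only: cnj_inner_on)
      ultimately show ?thesis using 3 by simp
    qed
  qed
  moreover have "\<mu> l' \<le> \<mu> l" if "l \<le> l'" "l' < m" for l l'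
    unfolding \<mu>_def using max_direction_norm_antimono[OF orth _ that] max that by auto
  moreover have "\<forall>l. 0 \<le> \<mu> l" unfolding \<mu>_def by (simp add: norm_sq_on_nonneg)
  ultimately show ?thesis using orth by (intro exI[of _ v] exI[of _ \<mu>]) auto
qed

lemma mat_vec_expansion:
  assumes "orthonormal_on {..<m} m v"
  shows "mat_vec m a y = (\<lambda>i. \<Sum>l<m. inner_on {..<m} (v l) y * mat_vec m a (v l) i)"
proof -
  have "y j = (\<Sum>l<m. inner_on {..<m} (v l) y * v l j)" if "j < m" for j
    by (rule orthonormal_on_expansion[OF finite_lessThan assms]) (use that in \<open>simp_all only: card_lessThan lessThan_iff order_refl\<close>)
  then have "mat_vec m a y = mat_vec m a (\<lambda>j. \<Sum>l<m. inner_on {..<m} (v l) y * v l j)"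
    unfolding mat_vec_def by (intro ext sum.cong refl) (simp only: lessThan_iff)
  then show ?thesis
    unfolding mat_vec_def by (simp add: sum_distrib_left mult_ac) (rule ext, rule sum.swap)
qed

lemma mat_entry_expansion:
  assumes "orthonormal_on {..<m} m v" "j < m"
  shows "a i j = (\<Sum>l<m. cnj (v l j) * mat_vec m a (v l) i)"
proof -
  have "a i j = mat_vec m a (basis_vec j) i"
    using assms(2) unfolding mat_vec_def basis_vec_def by (simp add: if_distrib cong: if_cong)
  also have "\<dots> = (\<Sum>l<m. inner_on {..<m} (v l) (basis_vec j) * mat_vec m a (v l) i)"
    by (subst mat_vec_expansion[OF assms(1)]) (rule refl)
  finally show ?thesis using assms(2) by (simp add: inner_on_basis_vec_right)
qed
lemma is_svals_of_singular_vectors: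
  assumes orth: "orthonormal_on {..<m} m v" and orth': "orthonormal_on {..<n} n u"
    and image: "\<And>l i. l < m \<Longrightarrow> i < n \<Longrightarrow> mat_vec m a (v l) i = complex_of_real (s l) * u l i"
    and "\<forall>l. 0 \<le> s l" "\<forall>l. min n m \<le> l \<longrightarrow> s l = 0" "\<forall>l l'. l \<le> l' \<longrightarrow> s l' \<le> s l"
  shows "is_svals n m a s"
proof -
  have "a i j = (\<Sum>l<min n m. u l i * complex_of_real (s l) * cnj (v l j))" if "i < n" "j < m" for i j
  proof -
    have "a i j = (\<Sum>l<m. cnj (v l j) * mat_vec m a (v l) i)"
      by (rule mat_entry_expansion[OF orth \<open>j < m\<close>])
    also have "\<dots> = (\<Sum>l<m. u l i * complex_of_real (s l) * cnj (v l j))"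
      by (intro sum.cong refl) (simp add: image \<open>i < n\<close>)
    also have "\<dots> = (\<Sum>l<min n m. u l i * complex_of_real (s l) * cnj (v l j))"
      by (rule sum.mono_neutral_right) (use assms(5) in auto)
    finally show ?thesis .
  qed
  moreover have "unitary_fun n (\<lambda>i l. u l i)" "unitary_fun m (\<lambda>j l. v l j)"
    using orth' orth unfolding unitary_fun_def orthonormal_on_def inner_on_def by auto
  ultimately show ?thesis
    unfolding is_svals_def using assms(4-6) by blast
qed

text \<open>With \<open>v\<close> diagonalising \<open>a\<^sup>* a\<close> and \<open>r\<close> the number of nonzero eigenvalues, the
  normalised images \<open>a v\<^sub>l / \<parallel>a v\<^sub>l\<parallel>\<close> (\<open>l < r\<close>) are orthonormal, hence \<open>r \<le> n\<close>, and any
  orthonormal basis extending them supplies the left singular vectors.\<close>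

lemma is_svals_exists: "\<exists>s. is_svals n m a s"
proof -
  obtain v \<mu> where orth: "orthonormal_on {..<m} m v" and \<mu>0: "\<forall>l. 0 \<le> \<mu> l"
    and dec: "\<forall>l l'. l \<le> l' \<longrightarrow> l' < m \<longrightarrow> \<mu> l' \<le> \<mu> l"
    and gram: "\<forall>p<m. \<forall>q<m. inner_on {..<n} (mat_vec m a (v p)) (mat_vec m a (v q)) =
                 (if p = q then complex_of_real (\<mu> p) else 0)"
    using exists_orthonormal_diagonalizing[of m n a] by (elim exE conjE) (rule that)
  define r where "r = (LEAST l. l < m \<longrightarrow> \<mu> l = 0)"
  have "r \<le> m" unfolding r_def by (rule Least_le) simp
  have pos: "\<mu> l > 0" if "l < r" for l
    using not_less_Least[OF that[unfolded r_def]] \<mu>0 by (simp add: order_less_le)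
  have "r < m \<longrightarrow> \<mu> r = 0" unfolding r_def by (rule LeastI[of _ m]) simp
  then have zero: "\<mu> l = 0" if "r \<le> l" "l < m" for l
    using dec \<mu>0 that by (metis antisym le_less_trans)
  define w where "w p i = complex_of_real (1 / sqrt (\<mu> p)) * mat_vec m a (v p) i" for p i
  have "orthonormal_on {..<n} r w"
    unfolding w_def by (rule orthonormal_on_normalize) (use gram pos \<open>r \<le> m\<close> in auto)
  moreover from this have "r \<le> n" using orthonormal_on_card_le by fastforce
  ultimately obtain u where u: "orthonormal_on {..<n} n u" "\<forall>l<r. u l = w l"
    using orthonormal_on_extend_basis[of "{..<n}" r w] by auto
  define s where "s l = (if l < r then sqrt (\<mu> l) else 0)" for l
  have "mat_vec m a (v l) i = complex_of_real (s l) * u l i" if "l < m" "i < n" for l i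
  proof (cases "l < r")
    case True
    have "complex_of_real (sqrt (\<mu> l)) * complex_of_real (1 / sqrt (\<mu> l)) = 1"
      using pos[OF True] by (simp flip: of_real_mult)
    then show ?thesis using u(2) True pos[OF True] unfolding s_def w_def by (simp add: mult.assoc[symmetric])
  next
    case False
    then have "complex_of_real (norm_sq_on n (mat_vec m a (v l))) = 0"
      using gram zero[of l] \<open>l < m\<close> by (simp flip: inner_on_self_lessThan)
    then show ?thesis using False \<open>i < n\<close> by (simp add: s_def norm_sq_on_eq_0_iff)
  qed
  moreover have "\<forall>l l'. l \<le> l' \<longrightarrow> s l' \<le> s l" "\<forall>l. 0 \<le> s l" "\<forall>l. min n m \<le> l \<longrightarrow> s l = 0"
    using dec \<mu>0 \<open>r \<le> n\<close> \<open>r \<le> m\<close> by (auto simp: s_def)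
  ultimately have "is_svals n m a s" using is_svals_of_singular_vectors[OF orth u(1)] by blast
  then show ?thesis by (rule exI[of _ s])
qed

lemma is_svals_diagonalizing:
  assumes "is_svals n m a s"
  shows "\<exists>v. orthonormal_on {..<m} m v \<and>
    (\<forall>p<m. \<forall>q<m. inner_on {..<n} (mat_vec m a (v p)) (mat_vec m a (v q)) =
                  (if p = q then complex_of_real ((s p)\<^sup>2) else 0))"
proof -
  obtain U V where U: "unitary_fun n U" and V: "unitary_fun m V"
    and dec: "\<forall>i<n. \<forall>j<m. a i j = (\<Sum>l<min n m. U i l * complex_of_real (s l) * cnj (V j l))"
    and sd: "\<forall>l. min n m \<le> l \<longrightarrow> s l = 0"
    using assms unfolding is_svals_def by blast
  define v where "v l j = V j l" for l j
  have image: "mat_vec m a (v q) i = complex_of_real (s q) * U i q" if "q < m" "i < n" for q i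
  proof -
    have "mat_vec m a (v q) i = (\<Sum>l<min n m. U i l * complex_of_real (s l) * (\<Sum>j<m. cnj (V j l) * V j q))"
      unfolding mat_vec_def v_def using dec that
      by (simp add: sum_distrib_left sum_distrib_right mult_ac) (rule sum.swap)
    also have "\<dots> = (\<Sum>l<min n m. if l = q then U i q * complex_of_real (s q) else 0)"
      using V that unfolding unitary_fun_def by (intro sum.cong refl) auto
    finally show ?thesis using sd by (auto simp: mult.commute)
  qed
  have "inner_on {..<n} (mat_vec m a (v p)) (mat_vec m a (v q)) =
      (if p = q then complex_of_real ((s p)\<^sup>2) else 0)" if "p < m" "q < m" for p q
  proof -
    have "inner_on {..<n} (mat_vec m a (v p)) (mat_vec m a (v q)) =
        complex_of_real (s p) * complex_of_real (s q) * (\<Sum>i<n. cnj (U i p) * U i q)"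
      unfolding inner_on_def using that by (simp add: image sum_distrib_left mult_ac)
    also have "\<dots> = (if p = q then complex_of_real ((s p)\<^sup>2) else 0)"
      using U sd unfolding unitary_fun_def by (cases "p < n \<and> q < n") (auto simp: power2_eq_square)
    finally show ?thesis .
  qed
  moreover have "orthonormal_on {..<m} m v"
    using V unfolding unitary_fun_def orthonormal_on_def inner_on_def v_def by auto
  ultimately show ?thesis by blast
qed

lemma inner_on_image_diagonalizing:
  assumes orth: "orthonormal_on {..<m} m w"
    and gram: "\<forall>p<m. \<forall>q<m. inner_on {..<n} (mat_vec m a (w p)) (mat_vec m a (w q)) =
                  (if p = q then complex_of_real (\<mu> p) else 0)"
    and "p < m"
  shows "inner_on {..<n} (mat_vec m a (w p)) (mat_vec m a y) = complex_of_real (\<mu> p) * inner_on {..<m} (w p) y"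
proof -
  have "inner_on {..<n} (mat_vec m a (w p)) (mat_vec m a y) =
      (\<Sum>l<m. inner_on {..<m} (w l) y * inner_on {..<n} (mat_vec m a (w p)) (mat_vec m a (w l)))"
    by (subst mat_vec_expansion[OF orth]) (rule inner_on_sum_right)
  also have "\<dots> = (\<Sum>l<m. if l = p then complex_of_real (\<mu> p) * inner_on {..<m} (w p) y else 0)"
    using gram \<open>p < m\<close> by (intro sum.cong refl) auto
  finally show ?thesis using \<open>p < m\<close> by simp
qed

text \<open>Min-max argument: if \<open>\<mu>' j < \<mu> j\<close>, the coordinates of \<open>w 0, \<dots>, w j\<close> in the basis \<open>w'\<close>
  vanish from index \<open>j\<close> on, so these \<open>j + 1\<close> orthonormal vectors would live in \<open>j\<close> dimensions.\<close>

lemma diagonalizing_values_le: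
  assumes orth: "orthonormal_on {..<m} m w"
    and gram: "\<forall>p<m. \<forall>q<m. inner_on {..<n} (mat_vec m a (w p)) (mat_vec m a (w q)) =
                  (if p = q then complex_of_real (\<mu> p) else 0)"
    and orth': "orthonormal_on {..<m} m w'"
    and gram': "\<forall>p<m. \<forall>q<m. inner_on {..<n} (mat_vec m a (w' p)) (mat_vec m a (w' q)) =
                  (if p = q then complex_of_real (\<mu>' p) else 0)"
    and dec: "\<forall>l l'. l \<le> l' \<longrightarrow> l' < m \<longrightarrow> \<mu> l' \<le> \<mu> l"
    and dec': "\<forall>l l'. l \<le> l' \<longrightarrow> l' < m \<longrightarrow> \<mu>' l' \<le> \<mu>' l"
    and "j < m"
  shows "\<mu> j \<le> \<mu>' j"
proof (rule ccontr)
  assume "\<not> \<mu> j \<le> \<mu>' j"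
  define c where "c q p = inner_on {..<m} (w' p) (w q)" for q p
  have eigen: "complex_of_real (\<mu>' p) * c q p = complex_of_real (\<mu> q) * c q p" if "p < m" "q < m" for p q
  proof -
    have "complex_of_real (\<mu>' p) * c q p = inner_on {..<n} (mat_vec m a (w' p)) (mat_vec m a (w q))"
      unfolding c_def by (rule inner_on_image_diagonalizing[OF orth' gram' that(1), symmetric])
    also have "\<dots> = cnj (complex_of_real (\<mu> q) * inner_on {..<m} (w q) (w' p))"
      by (subst inner_on_image_diagonalizing[OF orth gram that(2), symmetric]) (simp add: cnj_inner_on)
    finally show ?thesis unfolding c_def by (simp add: cnj_inner_on)
  qed
  have c_zero: "c q p = 0" if "j \<le> p" "p < m" "q \<le> j" for p q
  proof -
    have "\<mu>' p < \<mu> q" using dec dec' that \<open>j < m\<close> \<open>\<not> \<mu> j \<le> \<mu>' j\<close> by (meson le_less_trans not_le order_trans)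
    then show ?thesis using eigen[of p q] that \<open>j < m\<close> by auto
  qed
  have "inner_on {..<m} (c q) (c q') = inner_on {..<m} (w q) (w q')" for q q'
  proof -
    have "inner_on {..<m} (c q) (c q') = (\<Sum>p<m. cnj (c q p) * c q' p)" by (simp only: inner_on_def)
    also have "\<dots> = inner_on {..<m} (w q) (w q')"
      unfolding c_def by (rule parseval_on[OF finite_lessThan orth', symmetric]) simp
    finally show ?thesis .
  qed
  then have "orthonormal_on {..<m} (Suc j) c"
    using orth \<open>j < m\<close> unfolding orthonormal_on_def by auto
  moreover have "inner_on {..<m} (c q) (c q') = inner_on {..<j} (c q) (c q')" if "q < Suc j" for q q'
    unfolding inner_on_def by (rule sum.mono_neutral_right) (use \<open>j < m\<close> that c_zero in auto)
  ultimately have "orthonormal_on {..<j} (Suc j) c" unfolding orthonormal_on_def by simp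
  from orthonormal_on_card_le[OF finite_lessThan this] show False by simp
qed

lemma is_svals_unique:
  assumes "is_svals n m a s" "is_svals n m a s'"
  shows "s = s'"
proof
  fix l
  have s: "\<forall>l. 0 \<le> s l" "\<forall>l. min n m \<le> l \<longrightarrow> s l = 0" "\<forall>l l'. l \<le> l' \<longrightarrow> s l' \<le> s l"
    and s': "\<forall>l. 0 \<le> s' l" "\<forall>l. min n m \<le> l \<longrightarrow> s' l = 0" "\<forall>l l'. l \<le> l' \<longrightarrow> s' l' \<le> s' l"
    using assms unfolding is_svals_def by blast+
  have dec: "\<forall>l l'. l \<le> l' \<longrightarrow> l' < m \<longrightarrow> (s l')\<^sup>2 \<le> (s l)\<^sup>2"
    and dec': "\<forall>l l'. l \<le> l' \<longrightarrow> l' < m \<longrightarrow> (s' l')\<^sup>2 \<le> (s' l)\<^sup>2"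
    using s s' by (auto intro: power_mono)
  obtain w where w: "orthonormal_on {..<m} m w"
    "\<forall>p<m. \<forall>q<m. inner_on {..<n} (mat_vec m a (w p)) (mat_vec m a (w q)) =
                (if p = q then complex_of_real ((s p)\<^sup>2) else 0)"
    using is_svals_diagonalizing[OF assms(1)] by blast
  obtain w' where w': "orthonormal_on {..<m} m w'"
    "\<forall>p<m. \<forall>q<m. inner_on {..<n} (mat_vec m a (w' p)) (mat_vec m a (w' q)) =
                (if p = q then complex_of_real ((s' p)\<^sup>2) else 0)"
    using is_svals_diagonalizing[OF assms(2)] by blast
  show "s l = s' l"
  proof (cases "l < m")
    case True
    have "(s l)\<^sup>2 = (s' l)\<^sup>2"
      using diagonalizing_values_le[OF w w' dec dec' True] diagonalizing_values_le[OF w' w dec' dec True]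
      by simp
    then show ?thesis using s(1) s'(1) by (simp add: power2_eq_iff_nonneg)
  next
    case False then show ?thesis using s(2) s'(2) by simp
  qed
qed

lemma schmidt_eq_svals: "is_svals n m a s \<Longrightarrow> schmidt n m a j = s (j - 1)"
  unfolding schmidt_def using is_svals_unique by (metis the_equality)

lemma schmidt_svals: "\<exists>s. is_svals n m a s \<and> (\<forall>j. schmidt n m a j = s (j - 1))"
  using is_svals_exists schmidt_eq_svals by blast

lemma schmidt_nonneg: "0 \<le> schmidt n m a j"
  using schmidt_svals[of n m a] unfolding is_svals_def by metis

section \<open>Overlap with the maximally entangled vector\<close>

lemma admissible_nat:
  "admissible n m (real k) a \<longleftrightarrow> unit_vec n m a \<and> (\<forall>j. k + 1 \<le> j \<longrightarrow> schmidt n m a j = 0)"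
  unfolding admissible_def Let_def by simp

lemma admissible_frac:
  assumes "0 < \<theta>" "\<theta> < 1"
  shows "admissible n m (real k + \<theta>) a \<longleftrightarrow>
    unit_vec n m a \<and> (\<forall>j. k + 2 \<le> j \<longrightarrow> schmidt n m a j = 0) \<and>
    schmidt n m a (k + 1) \<le> \<theta> / real k * (\<Sum>j=1..k. schmidt n m a j)"
proof -
  have "\<lfloor>real k + \<theta>\<rfloor> = int k" "\<lceil>real k + \<theta>\<rceil> = int k + 1"
    using assms by (simp_all add: floor_eq_iff ceiling_eq_iff)
  then show ?thesis unfolding admissible_def Let_def using assms by (simp add: nat_add_distrib)
qed

lemma Vset_unit_vec: "a \<in> Vset n m \<beta> \<Longrightarrow> unit_vec n m a"
  unfolding Vset_def admissible_def Let_def by simp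

lemma unitary_fun_col_norm:
  assumes "unitary_fun n U" "l < n"
  shows "(\<Sum>i<n. (cmod (U i l))\<^sup>2) = 1"
proof -
  have "complex_of_real (\<Sum>i<n. (cmod (U i l))\<^sup>2) = (\<Sum>i<n. cnj (U i l) * U i l)"
    by (simp add: cnj_mult_self)
  also have "\<dots> = 1" using assms unfolding unitary_fun_def by auto
  finally show ?thesis by (simp only: of_real_eq_1_iff)
qed

lemma cmod_diag_sum_le_sum_svals:
  assumes "is_svals n m a s" "K \<le> n" "K \<le> m"
  shows "cmod (\<Sum>i<K. a i i) \<le> (\<Sum>l<min n m. s l)"
proof -
  obtain U V where U: "unitary_fun n U" and V: "unitary_fun m V"
    and dec: "\<forall>i<n. \<forall>j<m. a i j = (\<Sum>l<min n m. U i l * complex_of_real (s l) * cnj (V j l))"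
    and s0: "\<forall>l. 0 \<le> s l"
    using assms(1) unfolding is_svals_def by blast
  have overlap: "cmod (\<Sum>i<K. U i l * cnj (V i l)) \<le> 1" if "l < min n m" for l
  proof -
    have "cmod (\<Sum>i<K. U i l * cnj (V i l)) \<le> (\<Sum>i<K. cmod (U i l) * cmod (V i l))"
      by (rule order_trans[OF norm_sum]) (simp add: norm_mult)
    also have "\<dots> \<le> (\<Sum>i<K. ((cmod (U i l))\<^sup>2 + (cmod (V i l))\<^sup>2) / 2)"
      by (intro sum_mono) (use sum_squares_bound[of "cmod (U _ l)" "cmod (V _ l)"] in \<open>simp add: field_simps\<close>)
    also have "\<dots> = ((\<Sum>i<K. (cmod (U i l))\<^sup>2) + (\<Sum>i<K. (cmod (V i l))\<^sup>2)) / 2"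
      by (simp only: sum_divide_distrib sum.distrib add_divide_distrib)
    also have "\<dots> \<le> ((\<Sum>i<n. (cmod (U i l))\<^sup>2) + (\<Sum>i<m. (cmod (V i l))\<^sup>2)) / 2"
      by (intro divide_right_mono add_mono sum_mono2) (use assms(2,3) in auto)
    also have "\<dots> = 1" using unitary_fun_col_norm[OF U] unitary_fun_col_norm[OF V] that by simp
    finally show ?thesis .
  qed
  have "(\<Sum>i<K. a i i) = (\<Sum>i<K. \<Sum>l<min n m. U i l * complex_of_real (s l) * cnj (V i l))"
    using dec assms(2,3) by (intro sum.cong refl) auto
  also have "\<dots> = (\<Sum>l<min n m. complex_of_real (s l) * (\<Sum>i<K. U i l * cnj (V i l)))"
    by (subst sum.swap) (simp add: sum_distrib_left mult_ac)
  finally have "cmod (\<Sum>i<K. a i i) \<le> (\<Sum>l<min n m. s l * cmod (\<Sum>i<K. U i l * cnj (V i l)))"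
    using s0 by (simp add: order_trans[OF norm_sum] norm_mult)
  also have "\<dots> \<le> (\<Sum>l<min n m. s l)"
    using s0 overlap by (intro sum_mono) (simp add: mult_left_le)
  finally show ?thesis .
qed

lemma sum_norm_sq_eq_sum_svals_sq:
  assumes "is_svals n m a s"
  shows "(\<Sum>i<n. \<Sum>j<m. (cmod (a i j))\<^sup>2) = (\<Sum>l<min n m. (s l)\<^sup>2)"
proof -
  obtain v where orth: "orthonormal_on {..<m} m v"
    and gram: "\<forall>p<m. \<forall>q<m. inner_on {..<n} (mat_vec m a (v p)) (mat_vec m a (v q)) =
                (if p = q then complex_of_real ((s p)\<^sup>2) else 0)"
    using is_svals_diagonalizing[OF assms] by blast
  have row: "(\<Sum>j<m. (cmod (a i j))\<^sup>2) = (\<Sum>l<m. (cmod (mat_vec m a (v l) i))\<^sup>2)" for i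
  proof -
    define x where "x j = cnj (a i j)" for j
    have coeff: "inner_on {..<m} (v l) x = cnj (mat_vec m a (v l) i)" for l
      unfolding inner_on_def mat_vec_def x_def by (simp add: mult.commute)
    have "complex_of_real (\<Sum>j<m. (cmod (a i j))\<^sup>2) = inner_on {..<m} x x"
      by (simp add: inner_on_self x_def)
    also have "\<dots> = (\<Sum>l<m. cnj (inner_on {..<m} (v l) x) * inner_on {..<m} (v l) x)"
      by (rule parseval_on[OF finite_lessThan orth]) simp
    also have "\<dots> = complex_of_real (\<Sum>l<m. (cmod (mat_vec m a (v l) i))\<^sup>2)"
      by (simp only: coeff cnj_mult_self complex_mod_cnj of_real_sum)
    finally show ?thesis by (simp only: of_real_eq_iff)
  qed
  have "(\<Sum>i<n. \<Sum>j<m. (cmod (a i j))\<^sup>2) = (\<Sum>l<m. norm_sq_on n (mat_vec m a (v l)))"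
    unfolding row norm_sq_on_def by (rule sum.swap)
  also have "\<dots> = (\<Sum>l<m. (s l)\<^sup>2)"
  proof (intro sum.cong refl)
    fix l assume "l \<in> {..<m}"
    then have "complex_of_real (norm_sq_on n (mat_vec m a (v l))) = complex_of_real ((s l)\<^sup>2)"
      using gram by (simp flip: inner_on_self_lessThan)
    then show "norm_sq_on n (mat_vec m a (v l)) = (s l)\<^sup>2" by (simp only: of_real_eq_iff)
  qed
  also have "\<dots> = (\<Sum>l<min n m. (s l)\<^sup>2)"
    using assms unfolding is_svals_def by (intro sum.mono_neutral_right) auto
  finally show ?thesis .
qed

lemma unit_vec_svals_bounds:
  assumes "unit_vec n m a" "is_svals n m a s" "\<forall>l\<ge>r. s l = 0" "K \<le> n" "K \<le> m"
  shows "cmod (\<Sum>i<K. a i i) \<le> (\<Sum>l<r. s l)" and "(\<Sum>l<r. (s l)\<^sup>2) = 1"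
proof -
  have sd: "\<forall>l\<ge>min n m. s l = 0" using assms(2) unfolding is_svals_def by blast
  have same_range: "(\<Sum>l<min n m. f (s l)) = (\<Sum>l<r. f (s l))" if "f 0 = 0" for f :: "real \<Rightarrow> real"
  proof (cases "r \<le> min n m")
    case True then show ?thesis using assms(3) that by (intro sum.mono_neutral_right) auto
  next
    case False then show ?thesis using sd that by (intro sum.mono_neutral_left) auto
  qed
  show "cmod (\<Sum>i<K. a i i) \<le> (\<Sum>l<r. s l)"
    using cmod_diag_sum_le_sum_svals[OF assms(2,4,5)] same_range[of "\<lambda>x. x"] by simp
  show "(\<Sum>l<r. (s l)\<^sup>2) = 1"
    using sum_norm_sq_eq_sum_svals_sq[OF assms(2)] assms(1) same_range[of "\<lambda>x. x\<^sup>2"]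
    unfolding unit_vec_def by simp
qed

lemma Vset_nat_diag_sum_bound:
  assumes "a \<in> Vset n m (real k)" "K \<le> n" "K \<le> m"
  shows "(cmod (\<Sum>i<K. a i i))\<^sup>2 \<le> real k"
proof -
  obtain s where sv: "is_svals n m a s" and sch: "\<forall>j. schmidt n m a j = s (j - 1)"
    using schmidt_svals by blast
  have "\<forall>l\<ge>k. s l = 0"
    using assms(1) sch unfolding Vset_def mem_Collect_eq admissible_nat by (metis add_diff_cancel_right' add_le_mono1)
  note bounds = unit_vec_svals_bounds[OF Vset_unit_vec[OF assms(1)] sv this assms(2,3)]
  have "(cmod (\<Sum>i<K. a i i))\<^sup>2 \<le> (\<Sum>l<k. s l)\<^sup>2"
    using bounds(1) by (simp add: power_mono)
  also have "\<dots> \<le> (\<Sum>l<k. (s l)\<^sup>2) * real k"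
    using sum_squared_le_sum_of_squares[of s "{..<k}"] by simp
  finally show ?thesis using bounds(2) by simp
qed

text \<open>With \<open>S = s\<^sub>1 + \<dots> + s\<^sub>k\<close> and \<open>t = s\<^sub>k\<^sub>+\<^sub>1 \<le> \<theta> S / k\<close> one has
  \<open>(k + \<theta>\<^sup>2)(S + t) = (k + \<theta>)(S + \<theta> t) - (1 - \<theta>)(\<theta> S - k t) \<le> (k + \<theta>)(S + \<theta> t)\<close>, and
  Cauchy-Schwarz bounds \<open>S + \<theta> t\<close> by \<open>sqrt (k + \<theta>\<^sup>2)\<close>. Equality holds for
  \<open>s\<^sub>1 = \<dots> = s\<^sub>k = \<theta>\<^sup>-\<^sup>1 s\<^sub>k\<^sub>+\<^sub>1\<close>.\<close>

lemma frac_rank_sum_bound: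
  fixes k \<theta> S t Q :: real
  assumes "0 < k" "0 \<le> \<theta>" "\<theta> \<le> 1" "0 \<le> S" "0 \<le> t"
    and "t \<le> \<theta> / k * S" "S\<^sup>2 \<le> k * Q" "Q + t\<^sup>2 = 1"
  shows "(S + t)\<^sup>2 \<le> (k + \<theta>)\<^sup>2 / (k + \<theta>\<^sup>2)"
proof -
  have kt: "k * t \<le> \<theta> * S" using assms(1,6) by (simp add: field_simps)
  have "(k + \<theta>\<^sup>2) * (S + t) = (k + \<theta>) * (S + \<theta> * t) - (1 - \<theta>) * (\<theta> * S - k * t)"
    by (simp add: algebra_simps power2_eq_square)
  also have "\<dots> \<le> (k + \<theta>) * (S + \<theta> * t)"
    using assms(3) kt by simp
  finally have lin: "(k + \<theta>\<^sup>2) * (S + t) \<le> (k + \<theta>) * (S + \<theta> * t)" .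
  have "k * (S + \<theta> * t)\<^sup>2 = (k + \<theta>\<^sup>2) * (S\<^sup>2 + k * t\<^sup>2) - (\<theta> * S - k * t)\<^sup>2"
    by (simp add: algebra_simps power2_eq_square)
  also have "\<dots> \<le> (k + \<theta>\<^sup>2) * (S\<^sup>2 + k * t\<^sup>2)" by simp
  also have "\<dots> \<le> (k + \<theta>\<^sup>2) * k"
  proof (rule mult_left_mono)
    have "S\<^sup>2 + k * t\<^sup>2 \<le> k * (Q + t\<^sup>2)" using assms(7) by (simp add: algebra_simps)
    then show "S\<^sup>2 + k * t\<^sup>2 \<le> k" using assms(8) by simp
  qed (use assms(1) in simp)
  finally have "(S + \<theta> * t)\<^sup>2 \<le> k + \<theta>\<^sup>2" using assms(1) by (simp add: mult.commute)
  have "((k + \<theta>\<^sup>2) * (S + t))\<^sup>2 \<le> ((k + \<theta>) * (S + \<theta> * t))\<^sup>2"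
    using lin assms by (intro power_mono) auto
  also have "\<dots> \<le> (k + \<theta>)\<^sup>2 * (k + \<theta>\<^sup>2)"
    unfolding power_mult_distrib using \<open>(S + \<theta> * t)\<^sup>2 \<le> k + \<theta>\<^sup>2\<close> by (simp add: mult_left_mono)
  finally have "(k + \<theta>\<^sup>2) * ((k + \<theta>\<^sup>2) * (S + t)\<^sup>2) \<le> (k + \<theta>\<^sup>2) * (k + \<theta>)\<^sup>2"
    by (simp add: power_mult_distrib power2_eq_square mult_ac)
  moreover have "0 < k + \<theta>\<^sup>2" using assms(1) by (simp add: add_pos_nonneg)
  ultimately have "(k + \<theta>\<^sup>2) * (S + t)\<^sup>2 \<le> (k + \<theta>)\<^sup>2" by (simp add: mult_le_cancel_left_pos)
  with \<open>0 < k + \<theta>\<^sup>2\<close> show ?thesis by (simp add: pos_le_divide_eq mult.commute)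
qed

lemma Vset_frac_diag_sum_bound:
  assumes "1 \<le> k" "0 < \<theta>" "\<theta> < 1" "a \<in> Vset n m (real k + \<theta>)" "K \<le> n" "K \<le> m"
  shows "(cmod (\<Sum>i<K. a i i))\<^sup>2 \<le> (real k + \<theta>)\<^sup>2 / (real k + \<theta>\<^sup>2)"
proof -
  obtain s where sv: "is_svals n m a s" and sch: "\<forall>j. schmidt n m a j = s (j - 1)"
    using schmidt_svals by blast
  have adm: "\<forall>j. k + 2 \<le> j \<longrightarrow> schmidt n m a j = 0"
    "schmidt n m a (k + 1) \<le> \<theta> / real k * (\<Sum>j=1..k. schmidt n m a j)"
    using assms(4) unfolding Vset_def mem_Collect_eq admissible_frac[OF assms(2,3)] by auto
  have "\<forall>l\<ge>k + 1. s l = 0" using adm(1) sch by (metis add_diff_cancel_right' add_le_mono1 one_add_one add.assoc)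
  note bounds = unit_vec_svals_bounds[OF Vset_unit_vec[OF assms(4)] sv this assms(5,6)]
  have "(\<Sum>j=1..k. schmidt n m a j) = (\<Sum>l<k. s l)"
    using sch by (simp add: sum.atLeast1_atMost_eq)
  then have "s k \<le> \<theta> / real k * (\<Sum>l<k. s l)" using adm(2) sch by simp
  moreover have "(\<Sum>l<k. s l)\<^sup>2 \<le> real k * (\<Sum>l<k. (s l)\<^sup>2)"
    using sum_squared_le_sum_of_squares[of s "{..<k}"] by (simp add: mult.commute)
  moreover have "\<forall>l. 0 \<le> s l" using sv unfolding is_svals_def by blast
  ultimately have "((\<Sum>l<k. s l) + s k)\<^sup>2 \<le> (real k + \<theta>)\<^sup>2 / (real k + \<theta>\<^sup>2)"
    using bounds(2) assms(1-3) by (intro frac_rank_sum_bound) (auto intro: sum_nonneg)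
  moreover have "(cmod (\<Sum>i<K. a i i))\<^sup>2 \<le> ((\<Sum>l<k. s l) + s k)\<^sup>2"
    using bounds(1) by (simp add: power_mono)
  ultimately show ?thesis by linarith
qed

section \<open>Witnesses and cones\<close>

definition max_entangled :: "nat \<Rightarrow> nat \<times> nat \<Rightarrow> complex" where
  "max_entangled K x = (if fst x = snd x \<and> fst x < K then 1 else 0)"

definition witness :: "nat \<Rightarrow> nat \<Rightarrow> nat \<Rightarrow> real \<Rightarrow> (nat \<times> nat) \<Rightarrow> (nat \<times> nat) \<Rightarrow> complex" where
  "witness n m K c = (\<lambda>x y. if x \<in> tidx n m \<and> y \<in> tidx n m
      then (if x = y then complex_of_real c else 0) - max_entangled K x * max_entangled K y else 0)"

lemma hermitian_op_witness: "hermitian_op n m (witness n m K c)"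
  unfolding hermitian_op_def witness_def max_entangled_def by auto

lemma sum_tidx: "(\<Sum>x\<in>tidx n m. g x) = (\<Sum>i<n. \<Sum>j<m. g (i, j))"
  unfolding tidx_def by (simp add: sum.cartesian_product)

lemma sum_max_entangled:
  assumes "K \<le> n" "K \<le> m"
  shows "(\<Sum>x\<in>tidx n m. max_entangled K x * f x) = (\<Sum>i<K. f (i, i))"
proof -
  have "(\<Sum>x\<in>tidx n m. max_entangled K x * f x) = (\<Sum>x\<in>(\<lambda>i. (i, i)) ` {..<K}. max_entangled K x * f x)"
    using assms by (intro sum.mono_neutral_right) (auto simp: tidx_def max_entangled_def)
  also have "\<dots> = (\<Sum>i<K. f (i, i))"
    by (subst sum.reindex) (auto simp: inj_on_def max_entangled_def)
  finally show ?thesis .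
qed

lemma qform_witness:
  assumes "K \<le> n" "K \<le> m"
  shows "Re (qform n m (witness n m K c) a) =
    c * (\<Sum>i<n. \<Sum>j<m. (cmod (a i j))\<^sup>2) - (cmod (\<Sum>i<K. a i i))\<^sup>2"
proof -
  define b where "b = case_prod a"
  have "qform n m (witness n m K c) a =
      (\<Sum>x\<in>tidx n m. complex_of_real c * (cnj (b x) * b x)) -
      (\<Sum>x\<in>tidx n m. max_entangled K x * cnj (b x)) * (\<Sum>y\<in>tidx n m. max_entangled K y * b y)"
  proof -
    have "qform n m (witness n m K c) a = (\<Sum>x\<in>tidx n m. \<Sum>y\<in>tidx n m.
        (if x = y then complex_of_real c * (cnj (b x) * b y) else 0) -
        (max_entangled K x * cnj (b x)) * (max_entangled K y * b y))"
      unfolding qform_def witness_def b_def[symmetric] by (intro sum.cong refl) (auto simp: algebra_simps)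
    also have "\<dots> = (\<Sum>x\<in>tidx n m. complex_of_real c * (cnj (b x) * b x)) -
        (\<Sum>x\<in>tidx n m. max_entangled K x * cnj (b x)) * (\<Sum>y\<in>tidx n m. max_entangled K y * b y)"
      unfolding sum_subtractf sum_product by (simp add: tidx_def if_distrib cong: if_cong)
    finally show ?thesis .
  qed
  also have "\<dots> = complex_of_real (c * (\<Sum>i<n. \<Sum>j<m. (cmod (a i j))\<^sup>2) - (cmod (\<Sum>i<K. a i i))\<^sup>2)"
  proof -
    have "(\<Sum>x\<in>tidx n m. max_entangled K x * cnj (b x)) * (\<Sum>y\<in>tidx n m. max_entangled K y * b y) =
        complex_of_real ((cmod (\<Sum>i<K. a i i))\<^sup>2)"
      unfolding sum_max_entangled[OF assms] b_def by (simp flip: cnj_sum add: cnj_mult_self)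
    moreover have "(\<Sum>x\<in>tidx n m. complex_of_real c * (cnj (b x) * b x)) =
        complex_of_real (c * (\<Sum>i<n. \<Sum>j<m. (cmod (a i j))\<^sup>2))"
      by (simp add: sum_tidx b_def cnj_mult_self sum_distrib_left)
    ultimately show ?thesis by simp
  qed
  finally show ?thesis by simp
qed

lemma witness_in_BPset:
  assumes "\<forall>a\<in>Vset n m \<beta>. (cmod (\<Sum>i<K. a i i))\<^sup>2 \<le> c" "K \<le> n" "K \<le> m"
  shows "witness n m K c \<in> BPset n m \<beta>"
  using assms Vset_unit_vec
  unfolding BPset_def unit_vec_def by (simp add: hermitian_op_witness qform_witness)

definition trace_pairing ::
  "nat \<Rightarrow> nat \<Rightarrow> ((nat \<times> nat) \<Rightarrow> (nat \<times> nat) \<Rightarrow> complex) \<Rightarrow> ((nat \<times> nat) \<Rightarrow> (nat \<times> nat) \<Rightarrow> complex) \<Rightarrow> real"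
  where "trace_pairing n m W X = Re (\<Sum>x\<in>tidx n m. \<Sum>y\<in>tidx n m. W x y * X y x)"

lemma trace_pairing_rank1_op: "trace_pairing n m W (rank1_op a) = Re (qform n m W a)"
  unfolding trace_pairing_def qform_def rank1_op_def by (simp add: case_prod_beta mult_ac)

lemma trace_pairing_nonneg_cone:
  assumes "\<forall>v\<in>S. 0 \<le> trace_pairing n m W v" "X \<in> cvx_cone_gen S"
  shows "0 \<le> trace_pairing n m W X"
proof -
  obtain N :: nat and c v where cv: "\<forall>i<N. 0 \<le> c i \<and> v i \<in> S"
    and X: "X = (\<lambda>x y. \<Sum>i<N. complex_of_real (c i) * v i x y)"
    using assms(2) unfolding cvx_cone_gen_def by blast
  have "trace_pairing n m W X = (\<Sum>i<N. c i * trace_pairing n m W (v i))"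
    unfolding trace_pairing_def X
    by (simp add: sum_distrib_left mult_ac sum.swap[of _ "{..<N}"] Re_sum)
  also have "\<dots> \<ge> 0" using cv assms(1) by (intro sum_nonneg mult_nonneg_nonneg) auto
  finally show ?thesis .
qed

lemma continuous_on_trace_pairing: "continuous_on UNIV (trace_pairing n m W)"
proof -
  have "continuous_on UNIV (\<lambda>X::(nat \<times> nat) \<Rightarrow> (nat \<times> nat) \<Rightarrow> complex. X y x)" for x y
    by (rule continuous_on_product_then_coordinatewise[OF continuous_on_product_coordinates])
  then show ?thesis unfolding trace_pairing_def by (intro continuous_intros)
qed

lemma trace_pairing_nonneg_Kset:
  assumes "W \<in> BPset n m \<beta>" "X \<in> Kset n m \<beta>"
  shows "0 \<le> trace_pairing n m W X"
proof -
  have "cvx_cone_gen (rank1_op ` Vset n m \<beta>) \<subseteq> {X. 0 \<le> trace_pairing n m W X}"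
    using assms(1) trace_pairing_nonneg_cone[of "rank1_op ` Vset n m \<beta>" n m W]
    unfolding BPset_def by (auto simp: trace_pairing_rank1_op)
  moreover have "closed {X. 0 \<le> trace_pairing n m W X}"
    by (rule closed_Collect_le[OF continuous_on_const continuous_on_trace_pairing])
  ultimately have "Kset n m \<beta> \<subseteq> {X. 0 \<le> trace_pairing n m W X}"
    unfolding Kset_def by (rule closure_minimal)
  then show ?thesis using assms(2) by auto
qed

lemma rank1_op_in_Kset: "a \<in> Vset n m \<beta> \<Longrightarrow> rank1_op a \<in> Kset n m \<beta>"
  unfolding Kset_def cvx_cone_gen_def
  by (rule closure_subset[THEN subsetD], rule CollectI, rule exI[of _ 1])
    (auto intro!: exI[of _ "\<lambda>_. 1"] exI[of _ "\<lambda>_. rank1_op a"])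

lemma cvx_cone_gen_mono: "S \<subseteq> T \<Longrightarrow> cvx_cone_gen S \<subseteq> cvx_cone_gen T"
  unfolding cvx_cone_gen_def by blast

lemma Kset_mono: "Vset n m \<beta> \<subseteq> Vset n m \<gamma> \<Longrightarrow> Kset n m \<beta> \<subseteq> Kset n m \<gamma>"
  unfolding Kset_def by (intro closure_mono cvx_cone_gen_mono image_mono)

lemma BPset_antimono: "Vset n m \<beta> \<subseteq> Vset n m \<gamma> \<Longrightarrow> BPset n m \<gamma> \<subseteq> BPset n m \<beta>"
  unfolding BPset_def by blast

lemma strict_hierarchy_from_witness:
  assumes "Vset n m \<beta> \<subseteq> Vset n m \<gamma>" "W \<in> BPset n m \<beta>"
    and "a \<in> Vset n m \<gamma>" "Re (qform n m W a) < 0"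
  shows "Vset n m \<beta> \<subset> Vset n m \<gamma> \<and> Kset n m \<beta> \<subset> Kset n m \<gamma> \<and> BPset n m \<gamma> \<subset> BPset n m \<beta>"
proof -
  have "rank1_op a \<notin> Kset n m \<beta>"
    using trace_pairing_nonneg_Kset[OF assms(2)] assms(4) by (force simp: trace_pairing_rank1_op)
  moreover have "a \<notin> Vset n m \<beta>" "W \<notin> BPset n m \<gamma>"
    using assms(2-4) unfolding BPset_def by force+
  ultimately show ?thesis
    using assms(1,2,3) rank1_op_in_Kset[OF assms(3)] Kset_mono BPset_antimono by blast
qed

section \<open>The strict hierarchy\<close>

lemma Vset_nat_subset_frac:
  assumes "0 < \<theta>" "\<theta> < 1"
  shows "Vset n m (real k) \<subseteq> Vset n m (real k + \<theta>)"
proof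
  fix a assume "a \<in> Vset n m (real k)"
  then have "unit_vec n m a" "\<forall>j. k + 1 \<le> j \<longrightarrow> schmidt n m a j = 0"
    unfolding Vset_def admissible_nat by auto
  moreover have "0 \<le> \<theta> / real k * (\<Sum>j=1..k. schmidt n m a j)"
    using assms by (intro mult_nonneg_nonneg sum_nonneg schmidt_nonneg) auto
  ultimately show "a \<in> Vset n m (real k + \<theta>)"
    unfolding Vset_def mem_Collect_eq admissible_frac[OF assms] by auto
qed

lemma Vset_frac_subset_succ:
  assumes "0 < \<theta>" "\<theta> < 1"
  shows "Vset n m (real k + \<theta>) \<subseteq> Vset n m (real k + 1)"
  using admissible_nat[of n m "Suc k"] unfolding Vset_def admissible_frac[OF assms] by (auto simp: add.commute)

definition diag_vec :: "nat \<Rightarrow> (nat \<Rightarrow> real) \<Rightarrow> nat \<Rightarrow> nat \<Rightarrow> complex" where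
  "diag_vec K c = (\<lambda>i j. if i = j \<and> i < K then complex_of_real (c i) else 0)"

lemma is_svals_diag_vec:
  assumes "K \<le> min n m" "\<forall>l. 0 \<le> c l" "\<forall>l l'. l \<le> l' \<longrightarrow> l' < K \<longrightarrow> c l' \<le> c l"
  shows "is_svals n m (diag_vec K c) (\<lambda>l. if l < K then c l else 0)"
proof -
  define I where "I = (\<lambda>i j::nat. if i = j then (1::complex) else 0)"
  have "unitary_fun N I" for N
    unfolding unitary_fun_def I_def by (auto simp: if_distrib[of "\<lambda>z. _ * z"] cong: if_cong)
  moreover have "diag_vec K c i j = (\<Sum>l<min n m. I i l * complex_of_real (if l < K then c l else 0) * cnj (I j l))"
    if "i < n" "j < m" for i j
    using that assms(1) unfolding I_def diag_vec_def by (auto simp: if_distrib[of "\<lambda>z. z * _"] cong: if_cong)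
  ultimately show ?thesis
    unfolding is_svals_def using assms by (auto intro!: exI[of _ I])
qed

lemma schmidt_diag_vec:
  assumes "K \<le> min n m" "\<forall>l. 0 \<le> c l" "\<forall>l l'. l \<le> l' \<longrightarrow> l' < K \<longrightarrow> c l' \<le> c l"
  shows "schmidt n m (diag_vec K c) j = (if j - 1 < K then c (j - 1) else 0)"
  using schmidt_eq_svals[OF is_svals_diag_vec[OF assms]] by simp

lemma unit_vec_diag_vec:
  assumes "K \<le> min n m" "\<forall>l. 0 \<le> c l" "\<forall>l l'. l \<le> l' \<longrightarrow> l' < K \<longrightarrow> c l' \<le> c l"
    and "(\<Sum>l<K. (c l)\<^sup>2) = 1"
  shows "unit_vec n m (diag_vec K c)"
proof -
  have "(\<Sum>i<n. \<Sum>j<m. (cmod (diag_vec K c i j))\<^sup>2) = (\<Sum>l<min n m. (if l < K then c l else 0)\<^sup>2)"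
    by (rule sum_norm_sq_eq_sum_svals_sq[OF is_svals_diag_vec[OF assms(1-3)]])
  also have "\<dots> = 1"
    using assms(1,4) by (simp add: if_distrib[of "\<lambda>x. x\<^sup>2"] sum.If_cases lessThan_def[symmetric] Int_absorb1)
  finally show ?thesis
    unfolding unit_vec_def supported_vec_def using assms(1) by (auto simp: diag_vec_def)
qed

lemma cmod_diag_sum_diag_vec: "(cmod (\<Sum>i<K. diag_vec K c i i))\<^sup>2 = (\<Sum>i<K. c i)\<^sup>2"
proof -
  have "(\<Sum>i<K. diag_vec K c i i) = complex_of_real (\<Sum>i<K. c i)" unfolding diag_vec_def by simp
  then show ?thesis by (simp only: norm_of_real power2_abs)
qed

lemma frac_rank_bound_strict:
  fixes k \<theta> :: real
  assumes "0 < k" "0 < \<theta>" "\<theta> < 1"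
  shows "k < (k + \<theta>)\<^sup>2 / (k + \<theta>\<^sup>2)" and "(k + \<theta>)\<^sup>2 / (k + \<theta>\<^sup>2) < k + 1"
proof -
  have pos: "0 < k + \<theta>\<^sup>2" using assms(1) by (simp add: add_pos_nonneg)
  have "(k + \<theta>)\<^sup>2 - k * (k + \<theta>\<^sup>2) = \<theta>\<^sup>2 + k * \<theta> * (2 - \<theta>)"
    by (simp add: power2_eq_square algebra_simps)
  moreover have "0 < \<theta>\<^sup>2 + k * \<theta> * (2 - \<theta>)" using assms by (simp add: add_pos_nonneg)
  ultimately show "k < (k + \<theta>)\<^sup>2 / (k + \<theta>\<^sup>2)" using pos by (simp add: pos_less_divide_eq)
  have "(k + 1) * (k + \<theta>\<^sup>2) - (k + \<theta>)\<^sup>2 = k * (1 - \<theta>)\<^sup>2"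
    by (simp add: power2_eq_square algebra_simps)
  moreover have "0 < k * (1 - \<theta>)\<^sup>2" using assms by simp
  ultimately show "(k + \<theta>)\<^sup>2 / (k + \<theta>\<^sup>2) < k + 1" using pos by (simp add: pos_divide_less_eq)
qed

lemma exists_witness_nat_frac:
  assumes "1 \<le> k" "k + 1 \<le> min n m" "0 < \<theta>" "\<theta> < 1"
  shows "\<exists>W a. W \<in> BPset n m (real k) \<and> a \<in> Vset n m (real k + \<theta>) \<and> Re (qform n m W a) < 0"
proof -
  define x where "x = 1 / sqrt (real k + \<theta>\<^sup>2)"
  define c where "c l = (if l < k then x else \<theta> * x)" for l
  have "real k + \<theta>\<^sup>2 > 0" using assms(1) by (simp add: add_pos_nonneg)
  then have "x > 0" and x2: "x\<^sup>2 * (real k + \<theta>\<^sup>2) = 1" unfolding x_def by (simp_all add: power_divide)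
  have c0: "\<forall>l. 0 \<le> c l" and cdec: "\<forall>l l'. l \<le> l' \<longrightarrow> l' < k + 1 \<longrightarrow> c l' \<le> c l"
    unfolding c_def using \<open>x > 0\<close> assms(3,4) by (auto simp: mult_le_cancel_right1)
  have "(\<Sum>l<k + 1. (c l)\<^sup>2) = 1" using x2 by (simp add: c_def power_mult_distrib algebra_simps)
  note unit = unit_vec_diag_vec[OF assms(2) c0 cdec this]
  note sch = schmidt_diag_vec[OF assms(2) c0 cdec]
  have "(\<Sum>j=1..k. schmidt n m (diag_vec (k + 1) c) j) = (\<Sum>j=1..k. x)"
    unfolding sch by (intro sum.cong refl) (auto simp: c_def)
  moreover have "schmidt n m (diag_vec (k + 1) c) (k + 1) = \<theta> * x"
    unfolding sch by (simp add: c_def)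
  moreover have "\<forall>j\<ge>k + 2. schmidt n m (diag_vec (k + 1) c) j = 0"
    unfolding sch by auto
  ultimately have "diag_vec (k + 1) c \<in> Vset n m (real k + \<theta>)"
    using unit assms(1,3) unfolding Vset_def mem_Collect_eq admissible_frac[OF assms(3,4)] by simp
  moreover have "witness n m (k + 1) (real k) \<in> BPset n m (real k)"
    using assms(2) by (intro witness_in_BPset ballI Vset_nat_diag_sum_bound) auto
  moreover have "Re (qform n m (witness n m (k + 1) (real k)) (diag_vec (k + 1) c)) < 0"
  proof -
    have "real k < (real k + \<theta>)\<^sup>2 / (real k + \<theta>\<^sup>2)"
      using frac_rank_bound_strict(1) assms(1,3,4) by simp
    also have "\<dots> = ((real k + \<theta>) * x)\<^sup>2"
      unfolding x_def using \<open>real k + \<theta>\<^sup>2 > 0\<close> by (simp add: power_mult_distrib power_divide)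
    finally have "real k < ((real k + \<theta>) * x)\<^sup>2" .
    moreover have "(\<Sum>i<k + 1. c i) = (real k + \<theta>) * x" by (simp add: c_def algebra_simps)
    moreover have "k + 1 \<le> n" "k + 1 \<le> m" using assms(2) by simp_all
    ultimately show ?thesis
      using unit unfolding qform_witness[OF \<open>k + 1 \<le> n\<close> \<open>k + 1 \<le> m\<close>] cmod_diag_sum_diag_vec unit_vec_def
      by simp
  qed
  ultimately show ?thesis by blast
qed

lemma exists_witness_frac_succ:
  assumes "1 \<le> k" "k + 1 \<le> min n m" "0 < \<theta>" "\<theta> < 1"
  shows "\<exists>W a. W \<in> BPset n m (real k + \<theta>) \<and> a \<in> Vset n m (real k + 1) \<and> Re (qform n m W a) < 0"
proof -
  define x where "x = 1 / sqrt (real k + 1)"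
  define C where "C = (real k + \<theta>)\<^sup>2 / (real k + \<theta>\<^sup>2)"
  have "x > 0" and x2: "x\<^sup>2 * (real k + 1) = 1" unfolding x_def by (simp_all add: power_divide)
  have c0: "\<forall>l. 0 \<le> x" and cdec: "\<forall>l l'. l \<le> l' \<longrightarrow> l' < k + 1 \<longrightarrow> x \<le> x"
    using \<open>x > 0\<close> by auto
  have "(\<Sum>l<k + 1. x\<^sup>2) = 1" using x2 by (simp add: algebra_simps)
  note unit = unit_vec_diag_vec[OF assms(2), of "\<lambda>_. x", OF c0 cdec this]
  have "diag_vec (k + 1) (\<lambda>_. x) \<in> Vset n m (real (k + 1))"
    using unit unfolding Vset_def mem_Collect_eq admissible_nat
      schmidt_diag_vec[OF assms(2), of "\<lambda>_. x", OF c0 cdec] by auto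
  then have "diag_vec (k + 1) (\<lambda>_. x) \<in> Vset n m (real k + 1)" by (simp add: add.commute)
  moreover have "witness n m (k + 1) C \<in> BPset n m (real k + \<theta>)"
    unfolding C_def using assms by (intro witness_in_BPset ballI Vset_frac_diag_sum_bound) auto
  moreover have "Re (qform n m (witness n m (k + 1) C) (diag_vec (k + 1) (\<lambda>_. x))) < 0"
  proof -
    have "C < real k + 1" unfolding C_def using frac_rank_bound_strict(2) assms(1,3,4) by simp
    also have "\<dots> = (real k + 1) * (x\<^sup>2 * (real k + 1))" using x2 by simp
    also have "\<dots> = ((real k + 1) * x)\<^sup>2" by (simp add: power2_eq_square mult_ac)
    finally have "C < ((real k + 1) * x)\<^sup>2" .
    moreover have "k + 1 \<le> n" "k + 1 \<le> m" using assms(2) by simp_all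
    ultimately show ?thesis
      using unit unfolding qform_witness[OF \<open>k + 1 \<le> n\<close> \<open>k + 1 \<le> m\<close>] cmod_diag_sum_diag_vec unit_vec_def
      by (simp add: add.commute)
  qed
  ultimately show ?thesis by auto
qed

theorem proposition3p7:
  fixes n m k :: nat and \<theta> :: real
  assumes "1 \<le> k" and "k \<le> min n m - 1" and "0 < \<theta>" and "\<theta> < 1"
  shows "(Vset n m (real k) \<subset> Vset n m (real k + \<theta>) \<and>
         Vset n m (real k + \<theta>) \<subset> Vset n m (real k + 1)) \<and>
         (Kset n m (real k) \<subset> Kset n m (real k + \<theta>) \<and>
         Kset n m (real k + \<theta>) \<subset> Kset n m (real k + 1)) \<and>
         (BPset n m (real k) \<supset> BPset n m (real k + \<theta>) \<and>
         BPset n m (real k + \<theta>) \<supset> BPset n m (real k + 1))"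
proof -
  have dim: "k + 1 \<le> min n m" using assms(1,2) by linarith
  obtain W a where "W \<in> BPset n m (real k)" "a \<in> Vset n m (real k + \<theta>)" "Re (qform n m W a) < 0"
    using exists_witness_nat_frac[OF assms(1) dim assms(3,4)] by blast
  from strict_hierarchy_from_witness[OF Vset_nat_subset_frac[OF assms(3,4)] this]
  have lower: "Vset n m (real k) \<subset> Vset n m (real k + \<theta>) \<and> Kset n m (real k) \<subset> Kset n m (real k + \<theta>) \<and>
      BPset n m (real k + \<theta>) \<subset> BPset n m (real k)" .
  obtain W' a' where "W' \<in> BPset n m (real k + \<theta>)" "a' \<in> Vset n m (real k + 1)" "Re (qform n m W' a') < 0"
    using exists_witness_frac_succ[OF assms(1) dim assms(3,4)] by blast
  from strict_hierarchy_from_witness[OF Vset_frac_subset_succ[OF assms(3,4)] this]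
  have upper: "Vset n m (real k + \<theta>) \<subset> Vset n m (real k + 1) \<and> Kset n m (real k + \<theta>) \<subset> Kset n m (real k + 1) \<and>
      BPset n m (real k + 1) \<subset> BPset n m (real k + \<theta>)" .
  from lower upper show ?thesis by blast
qed

end
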